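(* Assume $p=2$ and let $s\ge1$. Then $V^{s-1}:K\to W_s(K)$ induces an isomorphism $\mathrm{fil}'_2K/\mathrm{fil}'_1K\xrightarrow{\sim}\mathrm{fil}'_2W_s(K)/\mathrm{fil}'_1W_s(K)$.
   Context: $K$ is a complete discrete valuation field of characteristic $p>0$ with normalized valuation $\mathrm{ord}_K$. $W_s(K)$: Witt vectors of length $s$, elements $(a_{s-1},\dots,a_0)$, $V(a_{s-1},\dots,a_0)=(0,a_{s-1},\dots,a_0)$, $W_1(K)=K$. $\mathrm{ord}_K(a)=\min_ip^i\mathrm{ord}_K(a_i)$, $\mathrm{fil}_nW_s(K)=\{a:\mathrm{ord}_K(a)\ge-n\}$. For $m\ge1$, with $s'=\min\{\mathrm{ord}_p(m),s\}$, $\mathrm{fil}'_mW_s(K)=\mathrm{fil}_{m-1}W_s(K)+V^{s-s'}\mathrm{fil}_mW_{s'}(K)$. *)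

theory Defs
  imports Main "HOL-Library.Poly_Mapping" "HOL-Computational_Algebra.Primes"
begin

text \<open>A normalized discrete valuation on a field is given by its values on nonzero
  elements (the value of 0 is +infinity and is never consulted).\<close>

definition normalized_discrete_valuation :: "('a::field \<Rightarrow> int) \<Rightarrow> bool" where
  "normalized_discrete_valuation ord \<longleftrightarrow>
     (\<forall>x y. x \<noteq> 0 \<and> y \<noteq> 0 \<longrightarrow> ord (x * y) = ord x + ord y) \<and>
     (\<forall>x y. x \<noteq> 0 \<and> y \<noteq> 0 \<and> x + y \<noteq> 0 \<longrightarrow> min (ord x) (ord y) \<le> ord (x + y)) \<and>
     (\<exists>\<pi>. \<pi> \<noteq> 0 \<and> ord \<pi> = 1)"

text \<open>"x is N-close to y": ord(x - y) \<ge> N (with ord 0 = +infinity).\<close>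
definition val_close :: "('a::field \<Rightarrow> int) \<Rightarrow> int \<Rightarrow> 'a \<Rightarrow> 'a \<Rightarrow> bool" where
  "val_close ord N x y \<longleftrightarrow> x = y \<or> N \<le> ord (x - y)"

definition complete_discrete_valuation :: "('a::field \<Rightarrow> int) \<Rightarrow> bool" where
  "complete_discrete_valuation ord \<longleftrightarrow> normalized_discrete_valuation ord \<and>
     (\<forall>X :: nat \<Rightarrow> 'a.
        (\<forall>N. \<exists>M. \<forall>m\<ge>M. \<forall>n\<ge>M. val_close ord N (X m) (X n)) \<longrightarrow>
        (\<exists>L. \<forall>N. \<exists>M. \<forall>n\<ge>M. val_close ord N (X n) L))"

type_synonym zpoly = "(nat \<Rightarrow>\<^sub>0 nat) \<Rightarrow>\<^sub>0 int"

definition pvar :: "nat \<Rightarrow> zpoly" where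
  "pvar k = Poly_Mapping.single (Poly_Mapping.single k 1) 1"

definition Xv :: "nat \<Rightarrow> zpoly" where "Xv i = pvar (2 * i)"
definition Yv :: "nat \<Rightarrow> zpoly" where "Yv i = pvar (2 * i + 1)"

definition witt_poly :: "nat \<Rightarrow> (nat \<Rightarrow> zpoly) \<Rightarrow> nat \<Rightarrow> zpoly" where
  "witt_poly p Z n = (\<Sum>i\<le>n. of_nat (p ^ i) * (Z i) ^ (p ^ (n - i)))"

definition coeff_div :: "int \<Rightarrow> zpoly \<Rightarrow> zpoly" where
  "coeff_div d P = Poly_Mapping.map (\<lambda>c. c div d) P"

text \<open>The list [S_0, ..., S_{n-1}] of Witt addition polynomials, determined by
  w_n(S) = w_n(X) + w_n(Y).\<close>
fun witt_sum_list :: "nat \<Rightarrow> nat \<Rightarrow> zpoly list" where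
  "witt_sum_list p 0 = []"
| "witt_sum_list p (Suc n) =
     (let L = witt_sum_list p n in
      L @ [coeff_div (int (p ^ n))
             (witt_poly p Xv n + witt_poly p Yv n
              - (\<Sum>i<n. of_nat (p ^ i) * (L ! i) ^ (p ^ (n - i))))])"

definition witt_sum_poly :: "nat \<Rightarrow> nat \<Rightarrow> zpoly" where
  "witt_sum_poly p n = witt_sum_list p (Suc n) ! n"

definition zpoly_eval :: "(nat \<Rightarrow> 'a::comm_ring_1) \<Rightarrow> zpoly \<Rightarrow> 'a" where
  "zpoly_eval f P = (\<Sum>m\<in>Poly_Mapping.keys P.
      of_int (Poly_Mapping.lookup P m) * (\<Prod>i\<in>Poly_Mapping.keys m. f i ^ Poly_Mapping.lookup m i))"

text \<open>An element (a_{s-1}, ..., a_0) of W_s(K) is the list [a_{s-1}, ..., a_0] of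
  length s.  The head a_{s-1} is the 0-th Witt component in the usual
  indexing, i.e. the list entry at position j is the j-th usual Witt component.
  Hence V(a_{s-1},...,a_0) = (0,a_{s-1},...,a_0) is consing 0, and W_1(K) = K via a \<mapsto> [a].\<close>

definition witt_add :: "nat \<Rightarrow> 'a::comm_ring_1 list \<Rightarrow> 'a list \<Rightarrow> 'a list" where
  "witt_add p x y = map (\<lambda>n. zpoly_eval
       (\<lambda>k. if even k then x ! (k div 2) else y ! (k div 2)) (witt_sum_poly p n))
     [0..<length x]"

definition witt_V :: "'a::zero list \<Rightarrow> 'a list" where
  "witt_V a = 0 # a"

definition wcomp :: "'a list \<Rightarrow> nat \<Rightarrow> 'a" where
  "wcomp a i = a ! (length a - 1 - i)"

definition witt_fil :: "('a::field \<Rightarrow> int) \<Rightarrow> nat \<Rightarrow> int \<Rightarrow> nat \<Rightarrow> 'a list set" where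
  "witt_fil ord p n s = {a. length a = s \<and>
      (\<forall>i<s. wcomp a i \<noteq> 0 \<longrightarrow> - n \<le> int (p ^ i) * ord (wcomp a i))}"

definition witt_fil' :: "('a::field \<Rightarrow> int) \<Rightarrow> nat \<Rightarrow> nat \<Rightarrow> nat \<Rightarrow> 'a list set" where
  "witt_fil' ord p m s =
    (let s' = min (multiplicity p m) s in
     {witt_add p a b | a b. a \<in> witt_fil ord p (int m - 1) s \<and>
        b \<in> (witt_V ^^ (s - s')) ` witt_fil ord p (int m) s'})"

end

theory Submission
  imports Defs
begin

text \<open>Write k = s - 1, so that V^k b = (0, ..., 0, b).  If the first k entries of y vanish,
  then x + y has the first k entries of x, and its last entry is the sum of the last entries
  of x and y.  This is seen on the universal addition polynomials: substituting 0 for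
  Y_0, ..., Y_{k-1} turns S_n into X_n for n < k and S_k into X_k + Y_k, because these satisfy
  the recursion defining the S_n (the substitution has to be made over the integers, as the
  recursion divides by powers of p).  Hence V^k is additive, and an element x + V^k b of
  fil'_p W_s(K), with x in fil_{p-1} W_s(K) and b in fil_p K, equals V^k(c + b) + x', where c is
  the last entry of x and x' is x with its last entry replaced by 0.  The other entries x_i,
  i \<ge> 1 in the paper's numbering, satisfy p^i ord(x_i) \<ge> 1 - p and hence ord(x_i) \<ge> 0, so
  x' lies in fil_0 W_s(K) = fil'_1 W_s(K); this gives surjectivity.  Comparing last entries in
  V^k a = V^k b + u gives injectivity.\<close>

definition zmonom_eval :: "(nat \<Rightarrow> 'a::comm_ring_1) \<Rightarrow> (nat \<Rightarrow>\<^sub>0 nat) \<Rightarrow> 'a" where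
  "zmonom_eval f m = (\<Prod>i\<in>Poly_Mapping.keys m. f i ^ Poly_Mapping.lookup m i)"

lemma zmonom_eval_conv_prod_superset:
  assumes "finite S" "Poly_Mapping.keys m \<subseteq> S"
  shows "zmonom_eval f m = (\<Prod>i\<in>S. f i ^ Poly_Mapping.lookup m i)"
  unfolding zmonom_eval_def
  by (rule prod.mono_neutral_left[OF assms]) (simp add: in_keys_iff)

lemma zmonom_eval_0 [simp]: "zmonom_eval f 0 = 1"
  by (simp add: zmonom_eval_def)

lemma zmonom_eval_add: "zmonom_eval f (m + n) = zmonom_eval f m * zmonom_eval f n"
proof -
  let ?S = "Poly_Mapping.keys m \<union> Poly_Mapping.keys n"
  have "zmonom_eval f (m + n) = (\<Prod>i\<in>?S. f i ^ Poly_Mapping.lookup (m + n) i)"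
    by (rule zmonom_eval_conv_prod_superset) (auto dest: keys_add[THEN subsetD])
  also have "\<dots> = (\<Prod>i\<in>?S. f i ^ Poly_Mapping.lookup m i) * (\<Prod>i\<in>?S. f i ^ Poly_Mapping.lookup n i)"
    by (simp add: lookup_add power_add prod.distrib)
  also have "\<dots> = zmonom_eval f m * zmonom_eval f n"
    by (simp add: zmonom_eval_conv_prod_superset[symmetric])
  finally show ?thesis .
qed

lemma zmonom_eval_eq_0:
  assumes "i \<in> Poly_Mapping.keys m" "f i = 0"
  shows "zmonom_eval f m = 0"
  unfolding zmonom_eval_def
  using assms by (intro prod_zero) (auto simp: in_keys_iff zero_power intro!: bexI[of _ i])

lemma zpoly_eval_conv_sum_superset:
  assumes "finite S" "Poly_Mapping.keys P \<subseteq> S"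
  shows "zpoly_eval f P = (\<Sum>m\<in>S. of_int (Poly_Mapping.lookup P m) * zmonom_eval f m)"
  unfolding zpoly_eval_def zmonom_eval_def[symmetric]
  by (rule sum.mono_neutral_left[OF assms]) (simp add: in_keys_iff)

lemma zpoly_eval_0 [simp]: "zpoly_eval f 0 = 0"
  by (simp add: zpoly_eval_def)

lemma zpoly_eval_add: "zpoly_eval f (P + Q) = zpoly_eval f P + zpoly_eval f Q"
proof -
  let ?S = "Poly_Mapping.keys P \<union> Poly_Mapping.keys Q"
  let ?t = "\<lambda>R m. of_int (Poly_Mapping.lookup R m) * zmonom_eval f m"
  have "zpoly_eval f (P + Q) = (\<Sum>m\<in>?S. ?t (P + Q) m)"
    by (rule zpoly_eval_conv_sum_superset) (auto dest: keys_add[THEN subsetD])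
  also have "\<dots> = (\<Sum>m\<in>?S. ?t P m) + (\<Sum>m\<in>?S. ?t Q m)"
    by (simp add: lookup_add distrib_right sum.distrib)
  also have "\<dots> = zpoly_eval f P + zpoly_eval f Q"
    by (simp add: zpoly_eval_conv_sum_superset[symmetric])
  finally show ?thesis .
qed

lemma zpoly_eval_single:
  "zpoly_eval f (Poly_Mapping.single m c) = of_int c * zmonom_eval f m"
  by (cases "c = 0") (simp_all add: zpoly_eval_def zmonom_eval_def)

lemma poly_mapping_add_single_induct [case_names zero add_single]:
  assumes "P 0"
    and "\<And>f a b. a \<notin> Poly_Mapping.keys f \<Longrightarrow> b \<noteq> 0 \<Longrightarrow> P f \<Longrightarrow> P (f + Poly_Mapping.single a b)"
  shows "P f"
proof (induct f rule: update_induct)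
  case (update f a b)
  have "Poly_Mapping.update a b f = f + Poly_Mapping.single a b"
    using update(1)
    by (intro poly_mapping_eqI) (auto simp: lookup_update lookup_add lookup_single in_keys_iff when_def)
  with update assms(2) show ?case by simp
qed (rule assms(1))

lemma zpoly_eval_mult: "zpoly_eval f (P * Q) = zpoly_eval f P * zpoly_eval f Q"
proof -
  have single_mult: "zpoly_eval f (Poly_Mapping.single m a * Q)
      = of_int a * zmonom_eval f m * zpoly_eval f Q" for m a
    by (induct Q rule: poly_mapping_add_single_induct)
      (simp_all add: distrib_left mult_single zpoly_eval_add zpoly_eval_single zmonom_eval_add)
  show ?thesis
    by (induct P rule: poly_mapping_add_single_induct)
      (simp_all add: distrib_right zpoly_eval_add single_mult zpoly_eval_single)
qed

lemma zpoly_eval_1 [simp]: "zpoly_eval f 1 = 1"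
  using zpoly_eval_single[of f 0 1] by simp

lemma zpoly_eval_diff: "zpoly_eval f (P - Q) = zpoly_eval f P - zpoly_eval f Q"
  using zpoly_eval_add[of f "P - Q" Q] by (simp add: eq_diff_eq)

lemma zpoly_eval_of_nat [simp]: "zpoly_eval f (of_nat n) = of_nat n"
  by (induct n) (simp_all add: zpoly_eval_add)

lemma zpoly_eval_power: "zpoly_eval f (P ^ n) = zpoly_eval f P ^ n"
  by (induct n) (simp_all add: zpoly_eval_mult)

lemma zpoly_eval_sum: "zpoly_eval f (sum g A) = (\<Sum>x\<in>A. zpoly_eval f (g x))"
  by (induct A rule: infinite_finite_induct) (simp_all add: zpoly_eval_add)

lemma zpoly_eval_pvar [simp]: "zpoly_eval f (pvar k) = f k"
  by (simp add: pvar_def zpoly_eval_single zmonom_eval_def)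

lemma zpoly_eval_witt_poly:
  "zpoly_eval f (witt_poly p W n) = witt_poly p (\<lambda>i. zpoly_eval f (W i)) n"
  by (simp add: witt_poly_def zpoly_eval_sum zpoly_eval_mult zpoly_eval_power del: of_nat_power)

definition zero_vars :: "nat set \<Rightarrow> zpoly \<Rightarrow> zpoly" where
  "zero_vars Z = zpoly_eval (\<lambda>k. if k \<in> Z then 0 else pvar k)"

lemma zero_vars_add: "zero_vars Z (P + Q) = zero_vars Z P + zero_vars Z Q"
  by (simp add: zero_vars_def zpoly_eval_add)

lemma zero_vars_pvar: "zero_vars Z (pvar k) = (if k \<in> Z then 0 else pvar k)"
  by (simp add: zero_vars_def)

lemma zero_vars_witt_poly: "zero_vars Z (witt_poly p W n) = witt_poly p (\<lambda>i. zero_vars Z (W i)) n"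
  by (simp add: zero_vars_def zpoly_eval_witt_poly)

lemma zero_vars_single:
  "zero_vars Z (Poly_Mapping.single m c)
     = (if Poly_Mapping.keys m \<inter> Z = {} then Poly_Mapping.single m c else 0)"
proof (cases "Poly_Mapping.keys m \<inter> Z = {}")
  case True
  have pvar_power: "pvar i ^ e = Poly_Mapping.single (Poly_Mapping.single i e) 1" for i e
    by (induct e) (simp_all add: pvar_def mult_single single_add[symmetric])
  have "zero_vars Z (Poly_Mapping.single m c)
      = of_int c * (\<Prod>i\<in>Poly_Mapping.keys m. pvar i ^ Poly_Mapping.lookup m i)"
    unfolding zero_vars_def zpoly_eval_single zmonom_eval_def
    using True by (intro arg_cong[where f = "(*) _"] prod.cong) auto
  also have "(\<Prod>i\<in>Poly_Mapping.keys m. pvar i ^ Poly_Mapping.lookup m i)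
      = Poly_Mapping.single (\<Sum>i\<in>Poly_Mapping.keys m. Poly_Mapping.single i (Poly_Mapping.lookup m i)) 1"
    unfolding pvar_power by (induct rule: finite_induct[OF finite_keys]) (simp_all add: mult_single)
  also have "(\<Sum>i\<in>Poly_Mapping.keys m. Poly_Mapping.single i (Poly_Mapping.lookup m i)) = m"
    by (rule poly_mapping_eqI) (auto simp: lookup_sum lookup_single when_def in_keys_iff)
  finally show ?thesis
    using True by (simp add: mult_single flip: single_of_int)
next
  case False
  then obtain i where "i \<in> Poly_Mapping.keys m" "i \<in> Z" by auto
  then show ?thesis
    using False by (simp add: zero_vars_def zpoly_eval_single zmonom_eval_eq_0)
qed

lemma lookup_zero_vars:
  "Poly_Mapping.lookup (zero_vars Z P) m
     = (if Poly_Mapping.keys m \<inter> Z = {} then Poly_Mapping.lookup P m else 0)"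
  by (induct P rule: poly_mapping_add_single_induct)
    (auto simp: zero_vars_def zpoly_eval_add zero_vars_single[unfolded zero_vars_def]
      lookup_add lookup_single when_def)

lemma zero_vars_coeff_div: "zero_vars Z (coeff_div d P) = coeff_div d (zero_vars Z P)"
  by (rule poly_mapping_eqI) (simp add: lookup_zero_vars coeff_div_def Poly_Mapping.map.rep_eq when_def)

lemma zpoly_eval_zero_vars:
  assumes "\<And>k. k \<in> Z \<Longrightarrow> f k = 0"
  shows "zpoly_eval f (zero_vars Z P) = zpoly_eval f P"
proof (induct P rule: poly_mapping_add_single_induct)
  case (add_single P m c)
  have "zpoly_eval f (zero_vars Z (Poly_Mapping.single m c)) = zpoly_eval f (Poly_Mapping.single m c)"
    using assms zmonom_eval_eq_0[of _ m f] by (auto simp: zero_vars_single zpoly_eval_single)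
  with add_single show ?case
    by (simp add: zero_vars_add zpoly_eval_add)
qed (simp add: zero_vars_def)

lemma length_witt_sum_list: "length (witt_sum_list p n) = n"
  by (induct n) (simp_all add: Let_def)

lemma nth_witt_sum_list: "i < n \<Longrightarrow> witt_sum_list p n ! i = witt_sum_poly p i"
proof (induct n)
  case (Suc n)
  then show ?case
    by (cases "i < n") (simp_all add: Let_def nth_append length_witt_sum_list witt_sum_poly_def less_Suc_eq)
qed simp

lemma witt_sum_poly_rec:
  "witt_sum_poly p n = coeff_div (int (p ^ n))
     (witt_poly p Xv n + witt_poly p Yv n
      - (\<Sum>i<n. of_nat (p ^ i) * witt_sum_poly p i ^ p ^ (n - i)))"
  by (simp add: witt_sum_poly_def Let_def nth_append length_witt_sum_list nth_witt_sum_list)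

lemma witt_poly_conv_lessThan:
  "witt_poly p W n = (\<Sum>i<n. of_nat (p ^ i) * W i ^ p ^ (n - i)) + of_nat (p ^ n) * W n"
  unfolding witt_poly_def by (simp flip: lessThan_Suc_atMost)

lemma coeff_div_of_nat_mult:
  assumes "c > 0"
  shows "coeff_div (int c) (of_nat c * Q) = Q"
proof -
  have "of_nat c * Q = Poly_Mapping.map ((*) (of_nat c)) Q"
    by (simp add: mult_map_scale_conv_mult flip: single_of_nat)
  with assms show ?thesis
    by (intro poly_mapping_eqI) (simp add: coeff_div_def Poly_Mapping.map.rep_eq when_def)
qed

lemma zero_vars_witt_sum_poly:
  assumes "p > 0"
    and ghost: "\<And>n. n \<le> k \<Longrightarrow>
      zero_vars Z (witt_poly p Xv n) + zero_vars Z (witt_poly p Yv n) = witt_poly p C n"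
    and "n \<le> k"
  shows "zero_vars Z (witt_sum_poly p n) = C n"
  using \<open>n \<le> k\<close>
proof (induct n rule: less_induct)
  case (less n)
  have "zero_vars Z (witt_sum_poly p n) = coeff_div (int (p ^ n))
     (zero_vars Z (witt_poly p Xv n) + zero_vars Z (witt_poly p Yv n)
      - (\<Sum>i<n. of_nat (p ^ i) * zero_vars Z (witt_sum_poly p i) ^ p ^ (n - i)))"
    by (subst witt_sum_poly_rec, simp only: zero_vars_coeff_div)
      (simp add: zero_vars_def zpoly_eval_add zpoly_eval_diff zpoly_eval_sum
        zpoly_eval_mult zpoly_eval_power del: of_nat_power)
  also have "\<dots> = coeff_div (int (p ^ n))
     (witt_poly p C n - (\<Sum>i<n. of_nat (p ^ i) * C i ^ p ^ (n - i)))"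
    using less by (simp add: ghost)
  finally show ?case
    using \<open>p > 0\<close> by (simp add: witt_poly_conv_lessThan coeff_div_of_nat_mult del: of_nat_power)
qed

lemma witt_poly_add_of_low_zeros:
  assumes "p > 0" and B: "\<And>i. i < k \<Longrightarrow> B i = 0" and "n \<le> k"
  shows "witt_poly p A n + witt_poly p B n
    = witt_poly p (\<lambda>i. if i < k then A i else A k + B k) n"
proof (cases "n < k")
  case True
  have "witt_poly p B n = 0"
    unfolding witt_poly_def using True \<open>p > 0\<close> by (intro sum.neutral) (auto simp: B zero_power)
  with True show ?thesis
    by (simp add: witt_poly_def)
next
  case False
  with \<open>n \<le> k\<close> have n: "n = k" by simp
  have "(\<Sum>i<k. of_nat (p ^ i) * B i ^ p ^ (k - i)) = (0::zpoly)"
    using \<open>p > 0\<close> by (intro sum.neutral) (auto simp: B zero_power)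
  then show ?thesis
    unfolding n witt_poly_conv_lessThan by (simp add: algebra_simps del: of_nat_power)
qed

lemma zero_vars_low_Y_witt_sum_poly:
  assumes "p > 0" "n \<le> k"
  shows "zero_vars {2 * i + 1 | i. i < k} (witt_sum_poly p n) = (if n < k then Xv n else Xv k + Yv k)"
proof -
  have "zero_vars {2 * i + 1 | i. i < k} (Xv i) = Xv i" for i
    by (auto simp: Xv_def zero_vars_pvar) presburger
  moreover have "zero_vars {2 * i + 1 | i. i < k} (Yv i) = (if i < k then 0 else Yv i)" for i
    by (auto simp: Yv_def zero_vars_pvar)
  ultimately show ?thesis
    using witt_poly_add_of_low_zeros[OF \<open>p > 0\<close>, of k "\<lambda>i. if i < k then 0 else Yv i" _ Xv]
    by (subst zero_vars_witt_sum_poly[OF assms(1) _ assms(2)]) (simp_all add: zero_vars_witt_poly)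
qed

lemma zero_vars_low_X_witt_sum_poly:
  assumes "p > 0" "n \<le> k"
  shows "zero_vars {2 * i | i. i < k} (witt_sum_poly p n) = (if n < k then Yv n else Xv k + Yv k)"
proof -
  have "zero_vars {2 * i | i. i < k} (Yv i) = Yv i" for i
    by (auto simp: Yv_def zero_vars_pvar) presburger
  moreover have "zero_vars {2 * i | i. i < k} (Xv i) = (if i < k then 0 else Xv i)" for i
    by (auto simp: Xv_def zero_vars_pvar)
  ultimately have "zero_vars {2 * i | i. i < k} (witt_sum_poly p n)
      = (\<lambda>i. if i < k then Yv i else Yv k + Xv k) n"
    using witt_poly_add_of_low_zeros[OF \<open>p > 0\<close>, of k "\<lambda>i. if i < k then 0 else Xv i" _ Yv]
    by (intro zero_vars_witt_sum_poly[OF assms(1) _ assms(2)]) (simp add: zero_vars_witt_poly add.commute)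
  then show ?thesis
    by (simp add: add.commute)
qed

lemma length_witt_add [simp]: "length (witt_add p x y) = length x"
  by (simp add: witt_add_def)

lemma nth_witt_add:
  "n < length x \<Longrightarrow> witt_add p x y ! n
     = zpoly_eval (\<lambda>k. if even k then x ! (k div 2) else y ! (k div 2)) (witt_sum_poly p n)"
  by (simp add: witt_add_def)

lemma nth_witt_add_of_low_zeros_right:
  fixes x y :: "'a::comm_ring_1 list"
  assumes "p > 0" and y: "\<And>i. i < k \<Longrightarrow> y ! i = 0" and "n \<le> k" "n < length x"
  shows "witt_add p x y ! n = (if n < k then x ! n else x ! k + y ! k)"
proof -
  let ?f = "\<lambda>k. if even k then x ! (k div 2) else y ! (k div 2)"
  have "witt_add p x y ! n = zpoly_eval ?f (witt_sum_poly p n)"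
    using assms by (simp add: nth_witt_add)
  also have "\<dots> = zpoly_eval ?f (zero_vars {2 * i + 1 | i. i < k} (witt_sum_poly p n))"
    using y by (intro zpoly_eval_zero_vars[symmetric]) auto
  also have "\<dots> = zpoly_eval ?f (if n < k then Xv n else Xv k + Yv k)"
    by (simp only: zero_vars_low_Y_witt_sum_poly[OF assms(1,3)])
  finally show ?thesis
    by (simp add: zpoly_eval_add Xv_def Yv_def)
qed

lemma nth_witt_add_of_low_zeros_left:
  fixes x y :: "'a::comm_ring_1 list"
  assumes "p > 0" and x: "\<And>i. i < k \<Longrightarrow> x ! i = 0" and "n \<le> k" "n < length x"
  shows "witt_add p x y ! n = (if n < k then y ! n else x ! k + y ! k)"
proof -
  let ?f = "\<lambda>k. if even k then x ! (k div 2) else y ! (k div 2)"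
  have "witt_add p x y ! n = zpoly_eval ?f (witt_sum_poly p n)"
    using assms by (simp add: nth_witt_add)
  also have "\<dots> = zpoly_eval ?f (zero_vars {2 * i | i. i < k} (witt_sum_poly p n))"
    using x by (intro zpoly_eval_zero_vars[symmetric]) auto
  also have "\<dots> = zpoly_eval ?f (if n < k then Yv n else Xv k + Yv k)"
    by (simp only: zero_vars_low_X_witt_sum_poly[OF assms(1,3)])
  finally show ?thesis
    by (simp add: zpoly_eval_add Xv_def Yv_def)
qed

lemma witt_add_replicate_zero_right:
  fixes x :: "'a::comm_ring_1 list"
  assumes "p > 0"
  shows "witt_add p x (replicate (length x) 0) = x"
  using assms by (intro nth_equalityI) (simp_all add: nth_witt_add_of_low_zeros_right[where k = i and n = i for i])

lemma witt_add_replicate_zero_left: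
  fixes y :: "'a::comm_ring_1 list"
  assumes "p > 0"
  shows "witt_add p (replicate (length y) 0) y = y"
  using assms by (intro nth_equalityI) (simp_all add: nth_witt_add_of_low_zeros_left[where k = i and n = i for i])

lemma witt_V_power: "(witt_V ^^ j) xs = replicate j 0 @ xs"
  by (induct j) (simp_all add: witt_V_def)

lemma witt_add_V_power_single:
  fixes a b :: "'a::comm_ring_1"
  assumes "p > 0"
  shows "witt_add p (replicate k 0 @ [a]) (replicate k 0 @ [b]) = replicate k 0 @ [a + b]"
  using assms
  by (intro nth_equalityI) (auto simp: nth_witt_add_of_low_zeros_right[where k = k] nth_append)

lemma last_witt_add_V_power_single:
  fixes b :: "'a::comm_ring_1"
  assumes "p > 0" "length u = Suc k"
  shows "last (witt_add p (replicate k 0 @ [b]) u) = b + last u"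
proof -
  have "last (witt_add p (replicate k 0 @ [b]) u) = witt_add p (replicate k 0 @ [b]) u ! k"
    by (simp add: last_conv_nth flip: length_greater_0_conv)
  also have "\<dots> = b + u ! k"
    using assms by (simp add: nth_witt_add_of_low_zeros_left[where k = k] nth_append)
  finally show ?thesis
    using assms(2) by (simp add: last_conv_nth flip: length_greater_0_conv)
qed

lemma witt_add_V_power_single_split_last:
  fixes x :: "'a::comm_ring_1 list"
  assumes "p > 0" "length x = Suc k"
  shows "witt_add p x (replicate k 0 @ [b])
    = witt_add p (replicate k 0 @ [last x + b]) (butlast x @ [0])"
proof (rule nth_equalityI)
  have "last x = x ! k"
    using assms(2) by (simp add: last_conv_nth flip: length_greater_0_conv)
  moreover fix n
  assume "n < length (witt_add p x (replicate k 0 @ [b]))"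
  ultimately show "witt_add p x (replicate k 0 @ [b]) ! n
      = witt_add p (replicate k 0 @ [last x + b]) (butlast x @ [0]) ! n"
    using assms by (simp add: nth_witt_add_of_low_zeros_right[where k = k]
        nth_witt_add_of_low_zeros_left[where k = k] nth_append nth_butlast)
qed (use assms in simp)

lemma witt_fil_length_one: "witt_fil ord p n 1 = (\<lambda>c. [c]) ` {c. c \<noteq> 0 \<longrightarrow> - n \<le> ord c}"
  by (auto simp: witt_fil_def wcomp_def length_Suc_conv)

lemma single_mem_witt_fil_iff: "[c] \<in> witt_fil ord p n 1 \<longleftrightarrow> (c \<noteq> 0 \<longrightarrow> - n \<le> ord c)"
  by (simp add: witt_fil_def wcomp_def)

lemma witt_fil_mono: "n \<le> n' \<Longrightarrow> witt_fil ord p n s \<subseteq> witt_fil ord p n' s"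
  by (force simp: witt_fil_def)

lemma replicate_zero_mem_witt_fil: "replicate s 0 \<in> witt_fil ord p n s"
  by (simp add: witt_fil_def wcomp_def)

lemma V_power_single_mem_witt_fil_iff:
  "replicate k 0 @ [a] \<in> witt_fil ord p n (Suc k) \<longleftrightarrow> [a] \<in> witt_fil ord p n 1"
proof -
  have "wcomp (replicate k 0 @ [a]) i = (if i = 0 then a else 0)" if "i < Suc k" for i
    using that by (simp add: wcomp_def nth_append)
  then show ?thesis
    unfolding single_mem_witt_fil_iff by (auto simp: witt_fil_def)
qed

lemma last_mem_witt_fil: "u \<in> witt_fil ord p n (Suc k) \<Longrightarrow> [last u] \<in> witt_fil ord p n 1"
  by (auto simp: witt_fil_def wcomp_def last_conv_nth simp flip: length_greater_0_conv)

lemma butlast_append_zero_mem_witt_fil_0: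
  assumes "n < int p" "u \<in> witt_fil ord p n (Suc k)"
  shows "butlast u @ [0] \<in> witt_fil ord p 0 (Suc k)"
  unfolding witt_fil_def
proof (intro CollectI conjI allI impI)
  have u: "length u = Suc k"
    using assms(2) by (simp add: witt_fil_def)
  then show "length (butlast u @ [0]) = Suc k" by simp
  fix i
  assume i: "i < Suc k" and nz: "wcomp (butlast u @ [0]) i \<noteq> 0"
  then have "0 < i" and comp: "wcomp (butlast u @ [0]) i = wcomp u i"
    using u by (auto simp: wcomp_def nth_append nth_butlast split: if_splits)
  have bound: "- n \<le> int (p ^ i) * ord (wcomp u i)"
    using assms(2) i nz comp by (simp add: witt_fil_def)
  have "int p \<le> int (p ^ i)"
    using \<open>0 < i\<close> by (cases p) (simp_all add: self_le_power del: power_Suc)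
  have "0 \<le> ord (wcomp u i)"
  proof (rule ccontr)
    assume "\<not> 0 \<le> ord (wcomp u i)"
    then have "int (p ^ i) * ord (wcomp u i) \<le> int (p ^ i) * (- 1)"
      by (intro mult_left_mono) auto
    with bound assms(1) \<open>int p \<le> int (p ^ i)\<close> show False
      by linarith
  qed
  then show "- 0 \<le> int (p ^ i) * ord (wcomp (butlast u @ [0]) i)"
    by (simp add: comp)
qed

lemma single_add_mem_witt_fil:
  assumes "normalized_discrete_valuation ord"
    and "[x] \<in> witt_fil ord p n 1" "[y] \<in> witt_fil ord p n 1"
  shows "[x + y] \<in> witt_fil ord p n 1"
proof -
  have x: "x \<noteq> 0 \<longrightarrow> - n \<le> ord x" and y: "y \<noteq> 0 \<longrightarrow> - n \<le> ord y"
    using assms(2,3) by (simp_all only: single_mem_witt_fil_iff)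
  have "x + y \<noteq> 0 \<longrightarrow> - n \<le> ord (x + y)"
  proof (cases "x = 0 \<or> y = 0")
    case False
    then have "x + y \<noteq> 0 \<longrightarrow> min (ord x) (ord y) \<le> ord (x + y)"
      using assms(1) by (simp add: normalized_discrete_valuation_def)
    with x y False show ?thesis
      by linarith
  qed (use x y in auto)
  then show ?thesis
    by (simp only: single_mem_witt_fil_iff)
qed

lemma witt_fil'_1:
  assumes "p > 0"
  shows "witt_fil' ord p 1 s = witt_fil ord p 0 s"
proof -
  have "witt_fil ord p 1 0 = {[]}"
    by (auto simp: witt_fil_def)
  then have "witt_fil' ord p 1 s = {witt_add p a (replicate s 0) | a. a \<in> witt_fil ord p 0 s}"
    by (simp add: witt_fil'_def witt_V_power)
  also have "\<dots> = witt_fil ord p 0 s"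
  proof -
    have "witt_add p a (replicate s 0) = a" if "a \<in> witt_fil ord p 0 s" for a
      using that assms witt_add_replicate_zero_right[of p a] by (simp add: witt_fil_def)
    then show ?thesis
      by (simp add: Setcompr_eq_image cong: image_cong)
  qed
  finally show ?thesis .
qed

lemma witt_fil'_prime:
  assumes "prime p" "0 < s"
  shows "witt_fil' ord p p s = {witt_add p a (replicate (s - 1) 0 @ [b]) | a b.
           a \<in> witt_fil ord p (int p - 1) s \<and> [b] \<in> witt_fil ord p (int p) 1}"
proof -
  have "min (multiplicity p p) s = 1"
    using assms by (simp add: multiplicity_self prime_gt_0_nat)
  moreover have "(witt_V ^^ (s - 1)) ` witt_fil ord p (int p) 1
      = {replicate (s - 1) 0 @ [b] | b. [b] \<in> witt_fil ord p (int p) 1}"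
    unfolding witt_fil_length_one by (auto simp: witt_V_power)
  ultimately show ?thesis
    unfolding witt_fil'_def Let_def by auto
qed

lemma witt_fil'_prime_length_one:
  assumes "normalized_discrete_valuation ord" "prime p"
  shows "witt_fil' ord p p 1 = witt_fil ord p (int p) 1"
proof (intro equalityI subsetI)
  have add: "witt_add p [x] [y] = [x + y]" for x y :: 'a
    using witt_add_V_power_single[of p 0 x y] assms(2) by (simp add: prime_gt_0_nat)
  note fil'_eq = witt_fil'_prime[OF assms(2) zero_less_one]
  fix w
  {
    assume "w \<in> witt_fil' ord p p 1"
    then obtain a b where w: "w = witt_add p a [b]" and a: "a \<in> witt_fil ord p (int p - 1) 1"
      and b: "[b] \<in> witt_fil ord p (int p) 1"
      unfolding fil'_eq by auto
    from a have "a \<in> witt_fil ord p (int p) 1"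
      using witt_fil_mono[of "int p - 1" "int p"] by auto
    then obtain x where x: "a = [x]" "[x] \<in> witt_fil ord p (int p) 1"
      unfolding witt_fil_length_one by auto
    show "w \<in> witt_fil ord p (int p) 1"
      unfolding w x(1) add using x(2) b by (rule single_add_mem_witt_fil[OF assms(1)])
  next
    assume "w \<in> witt_fil ord p (int p) 1"
    then obtain c where "w = [c]" "[c] \<in> witt_fil ord p (int p) 1"
      unfolding witt_fil_length_one by auto
    moreover have "[0] \<in> witt_fil ord p (int p - 1) 1"
      by (simp only: single_mem_witt_fil_iff) simp
    ultimately show "w \<in> witt_fil' ord p p 1"
      unfolding fil'_eq using add[of 0 c] by force
  }
qed

lemma V_power_single_mem_witt_fil'_prime:
  assumes "prime p" "[a] \<in> witt_fil ord p (int p) 1"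
  shows "replicate k 0 @ [a] \<in> witt_fil' ord p p (Suc k)"
proof -
  have "replicate k 0 @ [a] = witt_add p (replicate (Suc k) 0) (replicate k 0 @ [a])"
    using witt_add_replicate_zero_left[of p "replicate k 0 @ [a]"] assms(1)
    by (simp add: prime_gt_0_nat)
  then show ?thesis
    unfolding witt_fil'_prime[OF assms(1) zero_less_Suc] mem_Collect_eq
    using assms(2) replicate_zero_mem_witt_fil[of "Suc k"]
    by (intro exI[of _ "replicate (Suc k) 0"] exI[of _ a] conjI) simp_all
qed

lemma witt_fil'_prime_decompose:
  assumes "normalized_discrete_valuation ord" "prime p" "w \<in> witt_fil' ord p p (Suc k)"
  obtains a u where "[a] \<in> witt_fil ord p (int p) 1" "u \<in> witt_fil ord p 0 (Suc k)"
    and "w = witt_add p (replicate k 0 @ [a]) u"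
proof -
  obtain x b where w: "w = witt_add p x (replicate k 0 @ [b])"
    and x: "x \<in> witt_fil ord p (int p - 1) (Suc k)" and b: "[b] \<in> witt_fil ord p (int p) 1"
    using assms(3) unfolding witt_fil'_prime[OF assms(2) zero_less_Suc] by auto
  have "[last x] \<in> witt_fil ord p (int p) 1"
    using last_mem_witt_fil[OF x] witt_fil_mono[of "int p - 1" "int p"] by auto
  then have "[last x + b] \<in> witt_fil ord p (int p) 1"
    using b by (rule single_add_mem_witt_fil[OF assms(1)])
  moreover have "butlast x @ [0] \<in> witt_fil ord p 0 (Suc k)"
    using x by (intro butlast_append_zero_mem_witt_fil_0) auto
  moreover have "w = witt_add p (replicate k 0 @ [last x + b]) (butlast x @ [0])"
    using x assms(2) unfolding w
    by (intro witt_add_V_power_single_split_last) (auto simp: witt_fil_def prime_gt_0_nat)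
  ultimately show ?thesis
    using that by blast
qed

lemma single_diff_mem_witt_fil_of_V_power_eq:
  assumes "p > 0" "u \<in> witt_fil ord p n (Suc k)"
    and "replicate k 0 @ [a] = witt_add p (replicate k 0 @ [b]) u"
  shows "[a - b] \<in> witt_fil ord p n 1"
proof -
  have "a = b + last u"
    using arg_cong[OF assms(3), of last] assms(1,2)
    by (simp add: last_witt_add_V_power_single witt_fil_def)
  then show ?thesis
    using last_mem_witt_fil[OF assms(2)] by simp
qed

theorem lemma1p9:
  fixes ord :: "'a::field \<Rightarrow> int" and s :: nat
  assumes "CHAR('a) = 2"
    and "complete_discrete_valuation ord"
    and "1 \<le> s"
  shows "(\<forall>a. [a] \<in> witt_fil' ord 2 2 1 \<longrightarrow> (witt_V ^^ (s - 1)) [a] \<in> witt_fil' ord 2 2 s)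
       \<and> (\<forall>a. [a] \<in> witt_fil' ord 2 1 1 \<longrightarrow> (witt_V ^^ (s - 1)) [a] \<in> witt_fil' ord 2 1 s)
       \<and> (\<forall>a b :: 'a. (witt_V ^^ (s - 1)) [a + b]
                 = witt_add 2 ((witt_V ^^ (s - 1)) [a]) ((witt_V ^^ (s - 1)) [b]))
       \<and> (\<forall>a b. [a] \<in> witt_fil' ord 2 2 1 \<longrightarrow> [b] \<in> witt_fil' ord 2 2 1 \<longrightarrow>
                (\<exists>u\<in>witt_fil' ord 2 1 s.
                    (witt_V ^^ (s - 1)) [a] = witt_add 2 ((witt_V ^^ (s - 1)) [b]) u) \<longrightarrow>
                [a - b] \<in> witt_fil' ord 2 1 1)
       \<and> (\<forall>w\<in>witt_fil' ord 2 2 s. \<exists>a. [a] \<in> witt_fil' ord 2 2 1 \<and>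
                (\<exists>u\<in>witt_fil' ord 2 1 s. w = witt_add 2 ((witt_V ^^ (s - 1)) [a]) u))"
proof -
  obtain k where s: "s = Suc k"
    using assms(3) by (cases s) auto
  have val: "normalized_discrete_valuation ord"
    using assms(2) by (simp add: complete_discrete_valuation_def)
  have V: "(witt_V ^^ (s - 1)) [a] = replicate k 0 @ [a]" for a :: 'a
    by (simp add: s witt_V_power)
  have fil'_2_W1: "witt_fil' ord 2 2 1 = witt_fil ord 2 2 1"
    using witt_fil'_prime_length_one[OF val two_is_prime_nat] by simp
  have fil'_1: "witt_fil' ord 2 1 n = witt_fil ord 2 0 n" for n
    by (rule witt_fil'_1) simp
  show ?thesis
    unfolding V fil'_2_W1 fil'_1
  proof (intro conjI allI impI ballI)
    show "replicate k 0 @ [a] \<in> witt_fil' ord 2 2 s" if "[a] \<in> witt_fil ord 2 2 1" for a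
      using V_power_single_mem_witt_fil'_prime[OF two_is_prime_nat, of a ord k] that s by simp
    show "replicate k 0 @ [a] \<in> witt_fil ord 2 0 s" if "[a] \<in> witt_fil ord 2 0 1" for a
      using that by (simp only: s V_power_single_mem_witt_fil_iff)
    show "replicate k 0 @ [a + b] = witt_add 2 (replicate k 0 @ [a]) (replicate k 0 @ [b])" for a b :: 'a
      by (simp add: witt_add_V_power_single)
    show "[a - b] \<in> witt_fil ord 2 0 1"
      if "\<exists>u\<in>witt_fil ord 2 0 s. replicate k 0 @ [a] = witt_add 2 (replicate k 0 @ [b]) u" for a b
      using that single_diff_mem_witt_fil_of_V_power_eq[of 2 _ ord 0 k a b] unfolding s by auto
    show "\<exists>a. [a] \<in> witt_fil ord 2 2 1 \<and>
        (\<exists>u\<in>witt_fil ord 2 0 s. w = witt_add 2 (replicate k 0 @ [a]) u)"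
      if "w \<in> witt_fil' ord 2 2 s" for w
      using that unfolding s by (elim witt_fil'_prime_decompose[OF val two_is_prime_nat]) auto
  qed
qed

end
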